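(* For every integer $k\ge 7$, let $C_k$ be the cycle on $k$ vertices and $G=KB(C_k)$. Then for every vertex $q$ of $G$, the graph $G-\{q\}$ is not a biclique graph.
   Context: All graphs are finite, simple, undirected and connected. A biclique of a graph $H$ is a maximal (with respect to vertex-set inclusion) set of vertices inducing a complete bipartite subgraph $K_{r,s}$ with $r,s\ge 1$. The biclique graph $KB(H)$ is the intersection graph of the family of all bicliques of $H$: its vertices are the bicliques of $H$, and two bicliques are adjacent iff they share at least one vertex. A graph $G$ is a biclique graph if $G=KB(H)$ (up to isomorphism) for some graph $H$. *)

theory Defs
  imports Main
begin

definition simple_graph :: "'a set \<Rightarrow> ('a \<times> 'a) set \<Rightarrow> bool" where
  "simple_graph V E \<longleftrightarrow> finite V \<and> E \<subseteq> V \<times> V \<and> sym E \<and> irrefl E"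

definition connected_graph :: "'a set \<Rightarrow> ('a \<times> 'a) set \<Rightarrow> bool" where
  "connected_graph V E \<longleftrightarrow> V \<noteq> {} \<and> (\<forall>u\<in>V. \<forall>v\<in>V. (u, v) \<in> E\<^sup>*)"

definition induces_complete_bipartite :: "'a set \<Rightarrow> ('a \<times> 'a) set \<Rightarrow> 'a set \<Rightarrow> bool" where
  "induces_complete_bipartite V E S \<longleftrightarrow> S \<subseteq> V \<and>
     (\<exists>X Y. X \<noteq> {} \<and> Y \<noteq> {} \<and> X \<inter> Y = {} \<and> X \<union> Y = S \<and>
        (\<forall>x\<in>X. \<forall>y\<in>Y. (x, y) \<in> E) \<and>
        (\<forall>x\<in>X. \<forall>x'\<in>X. (x, x') \<notin> E) \<and>
        (\<forall>y\<in>Y. \<forall>y'\<in>Y. (y, y') \<notin> E))"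

definition is_biclique :: "'a set \<Rightarrow> ('a \<times> 'a) set \<Rightarrow> 'a set \<Rightarrow> bool" where
  "is_biclique V E S \<longleftrightarrow> induces_complete_bipartite V E S \<and>
     (\<forall>T. induces_complete_bipartite V E T \<and> S \<subseteq> T \<longrightarrow> T = S)"

definition bicliques :: "'a set \<Rightarrow> ('a \<times> 'a) set \<Rightarrow> 'a set set" where
  "bicliques V E = {S. is_biclique V E S}"

definition KB_edges :: "'a set \<Rightarrow> ('a \<times> 'a) set \<Rightarrow> ('a set \<times> 'a set) set" where
  "KB_edges V E = {(B1, B2). B1 \<in> bicliques V E \<and> B2 \<in> bicliques V E \<and> B1 \<noteq> B2 \<and> B1 \<inter> B2 \<noteq> {}}"

definition cycle_verts :: "nat \<Rightarrow> nat set" where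
  "cycle_verts k = {0..<k}"

definition cycle_edges :: "nat \<Rightarrow> (nat \<times> nat) set" where
  "cycle_edges k = {(i, j). i < k \<and> j < k \<and> (j = (i + 1) mod k \<or> i = (j + 1) mod k)}"

definition del_edges :: "('a \<times> 'a) set \<Rightarrow> 'a \<Rightarrow> ('a \<times> 'a) set" where
  "del_edges E q = {(u, v). (u, v) \<in> E \<and> u \<noteq> q \<and> v \<noteq> q}"

definition graph_iso :: "'a set \<Rightarrow> ('a \<times> 'a) set \<Rightarrow> 'b set \<Rightarrow> ('b \<times> 'b) set \<Rightarrow> bool" where
  "graph_iso V1 E1 V2 E2 \<longleftrightarrow> (\<exists>f. bij_betw f V1 V2 \<and>
     (\<forall>u\<in>V1. \<forall>v\<in>V1. (u, v) \<in> E1 \<longleftrightarrow> (f u, f v) \<in> E2))"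

text \<open>G is a biclique graph iff G \<cong> KB(H) for some finite simple connected graph H.
  Since H is finite, w.l.o.g. its vertices are natural numbers.\<close>
definition is_biclique_graph :: "'b set \<Rightarrow> ('b \<times> 'b) set \<Rightarrow> bool" where
  "is_biclique_graph V E \<longleftrightarrow> (\<exists>(VH :: nat set) EH. simple_graph VH EH \<and> connected_graph VH EH \<and>
     graph_iso (bicliques VH EH) (KB_edges VH EH) V E)"

end

theory Submission
  imports Defs
begin

text \<open>
  For \<open>k \<ge> 5\<close> the bicliques of \<open>C\<^sub>k\<close> are the stars \<open>{i - 1, i, i + 1}\<close>, and two of them meet
  iff their centres are at distance at most 2; so \<open>KB(C\<^sub>k)\<close> is the square of \<open>C\<^sub>k\<close>. Deleting
  the star centred at \<open>j\<close> leaves the stars centred at \<open>j \<plusminus> 1\<close> adjacent, without a common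
  neighbour (this needs \<open>k \<ge> 7\<close>), and each with a further neighbour, the star centred at
  \<open>j \<plusminus> 3\<close>.

  This cannot happen in a biclique graph. Let bicliques \<open>B\<close>, \<open>B'\<close> of \<open>H\<close> meet in \<open>x\<close> such that
  no other biclique meets both. Split \<open>B = X \<union> Y\<close> and \<open>B' = X' \<union> Y'\<close> into sides with
  \<open>x \<in> X \<inter> X'\<close>. Then \<open>Y\<close> and \<open>Y'\<close> are nested, since \<open>y \<in> Y - Y'\<close> and \<open>z \<in> Y' - Y\<close> would lie
  in a common biclique (through the edge \<open>yz\<close>, or the star \<open>x; y, z\<close>). If \<open>Y \<subseteq> Y'\<close>, then any
  biclique \<open>C\<close> meeting \<open>B\<close> but not \<open>B'\<close> contains some \<open>w \<in> X\<close> and a neighbour \<open>u\<close> of \<open>w\<close>, and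
  the star \<open>w; u, Y\<close> extends to a biclique meeting both \<open>B\<close> and \<open>B'\<close> but containing \<open>u\<close>, which
  lies in neither. Hence one of \<open>B\<close>, \<open>B'\<close> is a pendant vertex of \<open>KB(H)\<close>.
\<close>

section \<open>Adjacent bicliques without a common neighbour\<close>

definition complete_bipartition :: "('a \<times> 'a) set \<Rightarrow> 'a set \<Rightarrow> 'a set \<Rightarrow> bool" where
  "complete_bipartition E X Y \<longleftrightarrow> X \<noteq> {} \<and> Y \<noteq> {} \<and> X \<inter> Y = {} \<and>
     (\<forall>x\<in>X. \<forall>y\<in>Y. (x, y) \<in> E) \<and>
     (\<forall>x\<in>X. \<forall>x'\<in>X. (x, x') \<notin> E) \<and> (\<forall>y\<in>Y. \<forall>y'\<in>Y. (y, y') \<notin> E)"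

lemma induces_complete_bipartite_iff:
  "induces_complete_bipartite V E S \<longleftrightarrow> S \<subseteq> V \<and> (\<exists>X Y. complete_bipartition E X Y \<and> X \<union> Y = S)"
  unfolding induces_complete_bipartite_def complete_bipartition_def by (simp add: conj_ac)

lemma complete_bipartition_swap:
  "sym E \<Longrightarrow> complete_bipartition E X Y \<Longrightarrow> complete_bipartition E Y X"
  unfolding complete_bipartition_def sym_def by blast

lemma complete_bipartitionD:
  assumes "complete_bipartition E X Y"
  shows "x \<in> X \<Longrightarrow> y \<in> Y \<Longrightarrow> (x, y) \<in> E" "x \<in> X \<Longrightarrow> x' \<in> X \<Longrightarrow> (x, x') \<notin> E"
    "y \<in> Y \<Longrightarrow> y' \<in> Y \<Longrightarrow> (y, y') \<notin> E"
  using assms unfolding complete_bipartition_def by blast+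

lemma simple_graphD:
  assumes "simple_graph V E"
  shows "finite V" "sym E" "(x, y) \<in> E \<Longrightarrow> (y, x) \<in> E" "(x, y) \<in> E \<Longrightarrow> x \<in> V"
    "(x, y) \<in> E \<Longrightarrow> y \<in> V" "(x, x) \<notin> E"
  using assms unfolding simple_graph_def sym_def irrefl_def by blast+

lemma induces_complete_bipartite_side:
  assumes "induces_complete_bipartite V E S" "sym E" "x \<in> S"
  obtains X Y where "complete_bipartition E X Y" "X \<union> Y = S" "x \<in> X"
proof -
  obtain X Y where XY: "complete_bipartition E X Y" "X \<union> Y = S"
    using assms(1) unfolding induces_complete_bipartite_iff by blast
  show thesis
  proof (cases "x \<in> X")
    case True
    with XY that show thesis by blast
  next
    case False
    then have "x \<in> Y" using XY(2) assms(3) by blast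
    moreover have "Y \<union> X = S" using XY(2) by blast
    ultimately show thesis
      using complete_bipartition_swap[OF assms(2) XY(1)] that by blast
  qed
qed

lemma biclique_extension:
  assumes "finite V" "induces_complete_bipartite V E T"
  obtains S where "is_biclique V E S" "T \<subseteq> S"
proof -
  define A where "A = {U. induces_complete_bipartite V E U \<and> T \<subseteq> U}"
  have "A \<subseteq> Pow V"
    unfolding A_def induces_complete_bipartite_def by blast
  then have "finite A"
    using assms(1) finite_subset by blast
  moreover have "T \<in> A"
    unfolding A_def using assms(2) by simp
  ultimately obtain S where S: "S \<in> A" "\<And>U. U \<in> A \<Longrightarrow> S \<subseteq> U \<Longrightarrow> S = U"
    using finite_has_maximal[of A] by blast
  have "is_biclique V E S"
    unfolding is_biclique_def using S unfolding A_def by blast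
  with S(1) that show thesis
    unfolding A_def by blast
qed

lemma star_in_biclique:
  assumes G: "simple_graph V E"
    and "Y \<noteq> {}" "\<forall>y\<in>Y. (x, y) \<in> E" "\<forall>y\<in>Y. \<forall>y'\<in>Y. (y, y') \<notin> E"
  obtains D where "is_biclique V E D" "insert x Y \<subseteq> D"
proof -
  have "complete_bipartition E {x} Y"
    unfolding complete_bipartition_def using assms simple_graphD(6)[OF G] by blast
  moreover have "insert x Y \<subseteq> V"
    using assms simple_graphD(4,5)[OF G] by blast
  ultimately have "induces_complete_bipartite V E (insert x Y)"
    unfolding induces_complete_bipartite_iff by blast
  with biclique_extension simple_graphD(1)[OF G] that show thesis by blast
qed

lemma edge_in_biclique:
  assumes G: "simple_graph V E" and "(x, y) \<in> E"
  obtains D where "is_biclique V E D" "x \<in> D" "y \<in> D"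
proof -
  have "\<forall>u\<in>{y}. \<forall>u'\<in>{y}. (u, u') \<notin> E"
    using simple_graphD(6)[OF G] by blast
  moreover have "\<forall>u\<in>{y}. (x, u) \<in> E"
    using assms(2) by blast
  ultimately obtain D where "is_biclique V E D" "insert x {y} \<subseteq> D"
    using star_in_biclique[OF G, of "{y}" x] by blast
  then show thesis using that by blast
qed

lemma biclique_sides_nested:
  assumes G: "simple_graph V E"
    and only: "\<And>D. is_biclique V E D \<Longrightarrow> D \<inter> B \<noteq> {} \<Longrightarrow> D \<inter> B' \<noteq> {} \<Longrightarrow> D = B \<or> D = B'"
    and XY: "complete_bipartition E X Y" "X \<union> Y = B"
    and XY': "complete_bipartition E X' Y'" "X' \<union> Y' = B'"
    and x: "x \<in> X" "x \<in> X'"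
  shows "Y \<subseteq> Y' \<or> Y' \<subseteq> Y"
proof (rule ccontr)
  assume "\<not> (Y \<subseteq> Y' \<or> Y' \<subseteq> Y)"
  then obtain y z where yz: "y \<in> Y" "y \<notin> Y'" "z \<in> Y'" "z \<notin> Y" by blast
  have xy: "(x, y) \<in> E" and xz: "(x, z) \<in> E"
    using complete_bipartitionD(1)[OF XY(1) x(1) yz(1)] complete_bipartitionD(1)[OF XY'(1) x(2) yz(3)]
    by auto
  obtain D where D: "is_biclique V E D" "y \<in> D" "z \<in> D"
  proof (cases "(y, z) \<in> E")
    case True
    then show thesis using edge_in_biclique[OF G] that by blast
  next
    case False
    then have "\<forall>u\<in>{y, z}. \<forall>u'\<in>{y, z}. (u, u') \<notin> E"
      using simple_graphD(3,6)[OF G] by blast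
    moreover have "\<forall>u\<in>{y, z}. (x, u) \<in> E"
      using xy xz by blast
    ultimately obtain D where "is_biclique V E D" "insert x {y, z} \<subseteq> D"
      using star_in_biclique[OF G, of "{y, z}" x] by blast
    then show thesis using that by blast
  qed
  have "z \<notin> B" using complete_bipartitionD(2)[OF XY(1) x(1)] xz yz(4) XY(2) by blast
  moreover have "y \<notin> B'" using complete_bipartitionD(2)[OF XY'(1) x(2)] xy yz(2) XY'(2) by blast
  moreover have "D = B \<or> D = B'"
    using only[OF D(1)] D(2,3) yz(1,3) XY(2) XY'(2) by blast
  ultimately show False using D(2,3) by blast
qed

lemma no_private_biclique:
  assumes G: "simple_graph V E"
    and only: "\<And>D. is_biclique V E D \<Longrightarrow> D \<inter> B \<noteq> {} \<Longrightarrow> D \<inter> B' \<noteq> {} \<Longrightarrow> D = B \<or> D = B'"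
    and B: "is_biclique V E B" "complete_bipartition E X Y" "X \<union> Y = B" "Y \<subseteq> B'"
    and C: "is_biclique V E C" "C \<inter> B \<noteq> {}" "C \<inter> B' = {}"
  shows False
proof -
  obtain w where w: "w \<in> C" "w \<in> B" using C by blast
  then have wX: "w \<in> X" using B(3,4) C(3) by blast
  obtain P Q where PQ: "complete_bipartition E P Q" "P \<union> Q = C" "w \<in> P"
    using C(1) w(1) simple_graphD(2)[OF G] induces_complete_bipartite_side
    unfolding is_biclique_def by metis
  obtain u where u: "u \<in> C" "(w, u) \<in> E"
    using PQ complete_bipartitionD(1) unfolding complete_bipartition_def by blast
  have uB': "u \<notin> B'" using u(1) C(3) by blast
  have uB: "u \<notin> B" using complete_bipartitionD(2)[OF B(2) wX] u(2) uB' B(3,4) by blast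
  \<comment> \<open>an edge from \<open>u\<close> to \<open>Y \<subseteq> B \<inter> B'\<close> would lie in a biclique meeting both \<open>B\<close> and \<open>B'\<close>\<close>
  have uY: "(u, y) \<notin> E" if "y \<in> Y" for y
  proof
    assume "(u, y) \<in> E"
    then obtain D where "is_biclique V E D" "u \<in> D" "y \<in> D"
      using edge_in_biclique[OF G] by blast
    with only that B(3,4) uB uB' show False by blast
  qed
  have "\<forall>v\<in>insert u Y. \<forall>v'\<in>insert u Y. (v, v') \<notin> E"
    using uY complete_bipartitionD(3)[OF B(2)] simple_graphD(3,6)[OF G] by blast
  moreover have "\<forall>v\<in>insert u Y. (w, v) \<in> E"
    using u(2) complete_bipartitionD(1)[OF B(2) wX] by blast
  ultimately obtain D where D: "is_biclique V E D" "insert w (insert u Y) \<subseteq> D"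
    using star_in_biclique[OF G, of "insert u Y" w] by blast
  obtain y where "y \<in> Y" using B(2) unfolding complete_bipartition_def by blast
  then have "D = B \<or> D = B'" using only[OF D(1)] D(2) B(3,4) by blast
  then show False using D(2) uB uB' by blast
qed

lemma no_private_bicliques:
  assumes G: "simple_graph V E"
    and B: "is_biclique V E B" "is_biclique V E B'" "B \<inter> B' \<noteq> {}"
    and only: "\<And>D. is_biclique V E D \<Longrightarrow> D \<inter> B \<noteq> {} \<Longrightarrow> D \<inter> B' \<noteq> {} \<Longrightarrow> D = B \<or> D = B'"
    and C: "is_biclique V E C" "C \<inter> B \<noteq> {}" "C \<inter> B' = {}"
    and C': "is_biclique V E C'" "C' \<inter> B' \<noteq> {}" "C' \<inter> B = {}"
  shows False
proof -
  obtain x where x: "x \<in> B" "x \<in> B'" using B(3) by blast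
  obtain X Y where XY: "complete_bipartition E X Y" "X \<union> Y = B" "x \<in> X"
    using B(1) x(1) simple_graphD(2)[OF G] induces_complete_bipartite_side
    unfolding is_biclique_def by metis
  obtain X' Y' where XY': "complete_bipartition E X' Y'" "X' \<union> Y' = B'" "x \<in> X'"
    using B(2) x(2) simple_graphD(2)[OF G] induces_complete_bipartite_side
    unfolding is_biclique_def by metis
  have only': "\<And>D. is_biclique V E D \<Longrightarrow> D \<inter> B' \<noteq> {} \<Longrightarrow> D \<inter> B \<noteq> {} \<Longrightarrow> D = B' \<or> D = B"
    using only by blast
  from biclique_sides_nested[OF G only XY(1,2) XY'(1,2) XY(3) XY'(3)]
  show False
  proof
    assume "Y \<subseteq> Y'"
    with no_private_biclique[OF G only B(1) XY(1,2) _ C] XY'(2) show False by blast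
  next
    assume "Y' \<subseteq> Y"
    with no_private_biclique[OF G only' B(2) XY'(1,2) _ C'] XY(2) show False by blast
  qed
qed

lemma biclique_graph_pendant_edge:
  assumes "is_biclique_graph V E" "u \<in> V" "v \<in> V" "(u, v) \<in> E"
    and no_common: "\<not> (\<exists>w\<in>V. (u, w) \<in> E \<and> (v, w) \<in> E)"
  shows "{w \<in> V. (u, w) \<in> E} \<subseteq> {v} \<or> {w \<in> V. (v, w) \<in> E} \<subseteq> {u}"
proof (rule ccontr)
  assume "\<not> ?thesis"
  then obtain c d where c: "c \<in> V" "(u, c) \<in> E" "c \<noteq> v" and d: "d \<in> V" "(v, d) \<in> E" "d \<noteq> u"
    by blast
  obtain VH :: "nat set" and EH f where G: "simple_graph VH EH"
    and f: "bij_betw f (bicliques VH EH) V"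
    and f_edges: "\<forall>U\<in>bicliques VH EH. \<forall>W\<in>bicliques VH EH. (U, W) \<in> KB_edges VH EH \<longleftrightarrow> (f U, f W) \<in> E"
    using assms(1) unfolding is_biclique_graph_def graph_iso_def by blast
  have adj: "(f U, f W) \<in> E \<longleftrightarrow> U \<noteq> W \<and> U \<inter> W \<noteq> {}"
    if "is_biclique VH EH U" "is_biclique VH EH W" for U W
    using f_edges that unfolding KB_edges_def bicliques_def by auto
  have preimage: "\<exists>U. is_biclique VH EH U \<and> w = f U" if "w \<in> V" for w
    using f that unfolding bij_betw_def bicliques_def by blast
  obtain B B' C C' where B: "is_biclique VH EH B" "u = f B" and B': "is_biclique VH EH B'" "v = f B'"
    and C: "is_biclique VH EH C" "c = f C" and C': "is_biclique VH EH C'" "d = f C'"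
    using preimage assms(2,3) c(1) d(1) by metis
  have image: "f D \<in> V" if "is_biclique VH EH D" for D
    using f that unfolding bij_betw_def bicliques_def by blast
  have only: "D = B \<or> D = B'"
    if "is_biclique VH EH D" "D \<inter> B \<noteq> {}" "D \<inter> B' \<noteq> {}" for D
    using no_common adj[OF B(1) that(1)] adj[OF B'(1) that(1)] image[OF that(1)] that(2,3) B(2) B'(2)
    by blast
  show False
  proof (rule no_private_bicliques[OF G B(1) B'(1) _ only C(1) _ _ C'(1)])
    show "B \<inter> B' \<noteq> {}" "C \<inter> B \<noteq> {}" "C' \<inter> B' \<noteq> {}"
      using adj B B' C C' assms(4) c(2) d(2) by blast+
    show "C \<inter> B' = {}" "C' \<inter> B = {}"
      using adj B B' C C' no_common c d assms(2,3) by blast+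
  qed
qed

section \<open>The biclique graph of a cycle\<close>

definition cycle_succ :: "nat \<Rightarrow> nat \<Rightarrow> nat" where
  "cycle_succ k i = (if Suc i = k then 0 else Suc i)"

definition cycle_pred :: "nat \<Rightarrow> nat \<Rightarrow> nat" where
  "cycle_pred k i = (if i = 0 then k - 1 else i - 1)"

definition cycle_star :: "nat \<Rightarrow> nat \<Rightarrow> nat set" where
  "cycle_star k i = {cycle_pred k i, i, cycle_succ k i}"

definition cycle_ball2 :: "nat \<Rightarrow> nat \<Rightarrow> nat set" where
  "cycle_ball2 k i =
     {i, cycle_succ k i, cycle_pred k i, cycle_succ k (cycle_succ k i), cycle_pred k (cycle_pred k i)}"

lemmas cycle_defs = cycle_succ_def cycle_pred_def

lemma cycle_succ_less: "i < k \<Longrightarrow> cycle_succ k i < k"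
  unfolding cycle_succ_def by auto

lemma cycle_pred_less: "i < k \<Longrightarrow> cycle_pred k i < k"
  unfolding cycle_pred_def by auto

lemma cycle_pred_succ: "i < k \<Longrightarrow> cycle_pred k (cycle_succ k i) = i"
  unfolding cycle_defs by auto

lemma cycle_succ_pred: "i < k \<Longrightarrow> cycle_succ k (cycle_pred k i) = i"
  unfolding cycle_defs by auto

lemma cycle_edges_iff:
  "(i, j) \<in> cycle_edges k \<longleftrightarrow> i < k \<and> j < k \<and> (j = cycle_succ k i \<or> j = cycle_pred k i)"
  unfolding cycle_edges_def cycle_defs by (auto simp: mod_Suc)

lemma cycle_simple_graph: "3 \<le> k \<Longrightarrow> simple_graph (cycle_verts k) (cycle_edges k)"
  unfolding simple_graph_def sym_def irrefl_def cycle_verts_def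
  by (auto simp: cycle_edges_iff cycle_defs)

lemma cycle_common_neighbour_unique:
  assumes "5 \<le> k" "a \<noteq> b"
    and "(a, y) \<in> cycle_edges k" "(b, y) \<in> cycle_edges k"
    and "(a, y') \<in> cycle_edges k" "(b, y') \<in> cycle_edges k"
  shows "y = y'"
  using assms unfolding cycle_edges_iff cycle_defs by (auto split: if_splits)

lemma cycle_star_induces_complete_bipartite:
  assumes "5 \<le> k" "i < k"
  shows "induces_complete_bipartite (cycle_verts k) (cycle_edges k) (cycle_star k i)"
proof -
  have "complete_bipartition (cycle_edges k) {i} {cycle_pred k i, cycle_succ k i}"
    using assms unfolding complete_bipartition_def cycle_edges_iff cycle_defs by auto
  moreover have "cycle_star k i \<subseteq> cycle_verts k"
    unfolding cycle_star_def cycle_verts_def using assms(2) cycle_succ_less cycle_pred_less by auto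
  ultimately show ?thesis
    unfolding induces_complete_bipartite_iff cycle_star_def by auto
qed

lemma cycle_neighbour_in_star: "(i, j) \<in> cycle_edges k \<Longrightarrow> j \<in> cycle_star k i"
  unfolding cycle_edges_iff cycle_star_def by auto

lemma cycle_complete_bipartite_in_star:
  assumes "5 \<le> k" "induces_complete_bipartite (cycle_verts k) (cycle_edges k) S"
  obtains i where "i < k" "S \<subseteq> cycle_star k i"
proof -
  have sym: "sym (cycle_edges k)"
    using cycle_simple_graph assms(1) by (simp add: simple_graph_def)
  obtain X Y where XY: "complete_bipartition (cycle_edges k) X Y" "X \<union> Y = S"
    using assms(2) unfolding induces_complete_bipartite_iff by blast
  have "S \<subseteq> cycle_verts k"
    using assms(2) unfolding induces_complete_bipartite_iff by blast
  then have less: "i < k" if "i \<in> S" for i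
    using that unfolding cycle_verts_def by auto
  have centre: "X' \<union> Y' \<subseteq> cycle_star k x"
    if "complete_bipartition (cycle_edges k) X' Y'" "X' = {x}" for X' Y' x
    using that complete_bipartitionD(1) cycle_neighbour_in_star
    unfolding cycle_star_def by fastforce
  obtain x where x: "x \<in> X"
    using XY(1) unfolding complete_bipartition_def by blast
  obtain y where y: "y \<in> Y"
    using XY(1) unfolding complete_bipartition_def by blast
  show thesis
  proof (cases "X = {x}")
    case True
    have "S \<subseteq> cycle_star k x"
      using centre[OF XY(1) True] XY(2) by simp
    moreover have "x < k"
      using less x XY(2) by blast
    ultimately show thesis using that by blast
  next
    case False
    then obtain x' where x': "x' \<in> X" "x \<noteq> x'"
      using x by blast
    \<comment> \<open>two distinct vertices of \<open>X\<close> have all of \<open>Y\<close> as common neighbours\<close>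
    have "y' = y" if "y' \<in> Y" for y'
      using cycle_common_neighbour_unique[OF assms(1) x'(2)]
        complete_bipartitionD(1)[OF XY(1) x that] complete_bipartitionD(1)[OF XY(1) x'(1) that]
        complete_bipartitionD(1)[OF XY(1) x y] complete_bipartitionD(1)[OF XY(1) x'(1) y]
      by blast
    then have "Y = {y}"
      using y by blast
    then have "S \<subseteq> cycle_star k y"
      using centre[OF complete_bipartition_swap[OF sym XY(1)]] XY(2) by auto
    moreover have "y < k"
      using less y XY(2) by blast
    ultimately show thesis using that by blast
  qed
qed

lemma card_cycle_star: "5 \<le> k \<Longrightarrow> i < k \<Longrightarrow> card (cycle_star k i) = 3"
  unfolding cycle_star_def cycle_defs by (auto simp: card_insert_if)

lemma bicliques_cycle:
  assumes "5 \<le> k"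
  shows "bicliques (cycle_verts k) (cycle_edges k) = cycle_star k ` {..<k}"
proof (intro equalityI subsetI)
  fix S assume "S \<in> bicliques (cycle_verts k) (cycle_edges k)"
  then have S: "is_biclique (cycle_verts k) (cycle_edges k) S"
    unfolding bicliques_def by simp
  then obtain i where "i < k" "S \<subseteq> cycle_star k i"
    using cycle_complete_bipartite_in_star[OF assms] unfolding is_biclique_def by blast
  moreover have "S = cycle_star k i"
    using S cycle_star_induces_complete_bipartite[OF assms \<open>i < k\<close>] \<open>S \<subseteq> cycle_star k i\<close>
    unfolding is_biclique_def by blast
  ultimately show "S \<in> cycle_star k ` {..<k}" by blast
next
  fix S assume "S \<in> cycle_star k ` {..<k}"
  then obtain i where i: "i < k" "S = cycle_star k i" by blast
  have "T = S" if T: "induces_complete_bipartite (cycle_verts k) (cycle_edges k) T" "S \<subseteq> T" for T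
  proof -
    obtain m where "m < k" "T \<subseteq> cycle_star k m"
      using cycle_complete_bipartite_in_star[OF assms T(1)] by blast
    moreover have "card S = card (cycle_star k m)"
      using card_cycle_star[OF assms] i \<open>m < k\<close> by simp
    ultimately have "S = cycle_star k m"
      using T(2) card_subset_eq[of "cycle_star k m" S] unfolding cycle_star_def by blast
    with T(2) \<open>T \<subseteq> cycle_star k m\<close> show "T = S" by blast
  qed
  with cycle_star_induces_complete_bipartite[OF assms i(1)] i(2)
  show "S \<in> bicliques (cycle_verts k) (cycle_edges k)"
    unfolding bicliques_def is_biclique_def by blast
qed

lemma cycle_star_inj:
  assumes k: "5 \<le> k" and "i < k" "j < k" and eq: "cycle_star k i = cycle_star k j"
  shows "i = j"
proof -
  have "j \<in> cycle_star k i"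
    using eq unfolding cycle_star_def by blast
  then consider "j = cycle_pred k i" | "j = i" | "j = cycle_succ k i"
    unfolding cycle_star_def by blast
  then show ?thesis
  proof cases
    case 1
    then have "cycle_pred k (cycle_pred k i) \<in> cycle_star k i"
      using eq unfolding cycle_star_def by blast
    then show ?thesis
      using k \<open>i < k\<close> unfolding cycle_star_def cycle_defs by (auto split: if_splits)
  next
    case 3
    then have "cycle_succ k (cycle_succ k i) \<in> cycle_star k i"
      using eq unfolding cycle_star_def by blast
    then show ?thesis
      using k \<open>i < k\<close> unfolding cycle_star_def cycle_defs by (auto split: if_splits)
  qed simp
qed

lemma cycle_star_less: "i < k \<Longrightarrow> j \<in> cycle_star k i \<Longrightarrow> j < k"
  unfolding cycle_star_def using cycle_succ_less cycle_pred_less by auto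

lemma cycle_star_sym: "i < k \<Longrightarrow> j < k \<Longrightarrow> j \<in> cycle_star k i \<longleftrightarrow> i \<in> cycle_star k j"
  unfolding cycle_star_def using cycle_pred_succ cycle_succ_pred by auto

lemma Union_cycle_star: "i < k \<Longrightarrow> \<Union> (cycle_star k ` cycle_star k i) = cycle_ball2 k i"
  unfolding cycle_star_def cycle_ball2_def using cycle_pred_succ cycle_succ_pred by auto

lemma cycle_star_meet_iff:
  assumes "i < k" "j < k"
  shows "cycle_star k i \<inter> cycle_star k j \<noteq> {} \<longleftrightarrow> j \<in> cycle_ball2 k i"
proof -
  have "cycle_star k i \<inter> cycle_star k j \<noteq> {} \<longleftrightarrow> (\<exists>x\<in>cycle_star k i. j \<in> cycle_star k x)"
    using cycle_star_sym[OF _ assms(2)] cycle_star_less[OF assms(1)] by blast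
  also have "\<dots> \<longleftrightarrow> j \<in> cycle_ball2 k i"
    using Union_cycle_star[OF assms(1)] by blast
  finally show ?thesis .
qed

text \<open>For \<open>k = 6\<close> the vertex \<open>j + 3\<close> would lie in both balls.\<close>

lemma cycle_ball2_inter:
  assumes "7 \<le> k" "j < k" "i < k"
    and "i \<in> cycle_ball2 k (cycle_succ k j)" "i \<in> cycle_ball2 k (cycle_pred k j)"
  shows "i \<in> cycle_star k j"
  using assms unfolding cycle_ball2_def cycle_star_def cycle_defs by (auto split: if_splits)

lemma cycle_distinct_offsets:
  assumes "7 \<le> k" "j < k"
  shows "distinct [cycle_pred k (cycle_pred k (cycle_pred k j)), cycle_pred k j, j,
                   cycle_succ k j, cycle_succ k (cycle_succ k (cycle_succ k j))]"
  using assms unfolding cycle_defs by (auto split: if_splits)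

lemma KB_edges_cycle_star_iff:
  assumes "5 \<le> k" "i < k" "j < k"
  shows "(cycle_star k i, cycle_star k j) \<in> KB_edges (cycle_verts k) (cycle_edges k)
           \<longleftrightarrow> i \<noteq> j \<and> j \<in> cycle_ball2 k i"
  using assms cycle_star_inj[OF assms(1)] cycle_star_meet_iff[OF assms(2,3)]
  unfolding KB_edges_def bicliques_cycle[OF assms(1)] by auto

lemma cycle_star_in_bicliques_minus_iff:
  assumes "5 \<le> k" "i < k" "j < k"
  shows "cycle_star k i \<in> bicliques (cycle_verts k) (cycle_edges k) - {cycle_star k j} \<longleftrightarrow> i \<noteq> j"
  using assms cycle_star_inj[OF assms(1)] bicliques_cycle[OF assms(1)] by auto

lemma KB_edges_cycle_minus_star_iff:
  assumes "5 \<le> k" "i < k" "i' < k" "j < k"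
  shows "(cycle_star k i, cycle_star k i') \<in> del_edges (KB_edges (cycle_verts k) (cycle_edges k)) (cycle_star k j)
           \<longleftrightarrow> i \<noteq> j \<and> i' \<noteq> j \<and> i \<noteq> i' \<and> i' \<in> cycle_ball2 k i"
  using assms cycle_star_inj[OF assms(1)] KB_edges_cycle_star_iff[OF assms(1-3)]
  unfolding del_edges_def by auto

lemma KB_cycle_minus_star_local_structure:
  assumes k: "7 \<le> k" and j: "j < k"
  defines "V \<equiv> bicliques (cycle_verts k) (cycle_edges k) - {cycle_star k j}"
    and "E \<equiv> del_edges (KB_edges (cycle_verts k) (cycle_edges k)) (cycle_star k j)"
    and "u \<equiv> cycle_star k (cycle_succ k j)" and "v \<equiv> cycle_star k (cycle_pred k j)"
  shows "u \<in> V" "v \<in> V" "(u, v) \<in> E" "\<not> (\<exists>w\<in>V. (u, w) \<in> E \<and> (v, w) \<in> E)"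
    "\<not> {w \<in> V. (u, w) \<in> E} \<subseteq> {v}" "\<not> {w \<in> V. (v, w) \<in> E} \<subseteq> {u}"
proof -
  have k5: "5 \<le> k" using k by simp
  define a b where "a = cycle_succ k j" and "b = cycle_pred k j"
  define c d where "c = cycle_succ k (cycle_succ k a)" and "d = cycle_pred k (cycle_pred k b)"
  have less: "a < k" "b < k" "c < k" "d < k"
    unfolding a_def b_def c_def d_def using j cycle_succ_less cycle_pred_less by simp_all
  have distinct: "distinct [d, b, j, a, c]"
    using cycle_distinct_offsets[OF k j] unfolding a_def b_def c_def d_def .
  have uv: "u = cycle_star k a" "v = cycle_star k b"
    unfolding u_def v_def a_def b_def by simp_all
  note vertex = cycle_star_in_bicliques_minus_iff[OF k5 _ j, folded V_def]
  note edge = KB_edges_cycle_minus_star_iff[OF k5 _ _ j, folded E_def]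
  show "u \<in> V" "v \<in> V"
    unfolding uv using vertex less distinct by auto
  have "b \<in> cycle_ball2 k a"
    unfolding a_def b_def cycle_ball2_def using cycle_pred_succ[OF j] by simp
  then show "(u, v) \<in> E"
    unfolding uv using edge less distinct by auto
  show "\<not> (\<exists>w\<in>V. (u, w) \<in> E \<and> (v, w) \<in> E)"
  proof
    assume "\<exists>w\<in>V. (u, w) \<in> E \<and> (v, w) \<in> E"
    then obtain i where i: "i < k" "(cycle_star k a, cycle_star k i) \<in> E" "(cycle_star k b, cycle_star k i) \<in> E"
      unfolding V_def uv using bicliques_cycle[OF k5] by auto
    then have "i \<in> cycle_ball2 k a" "i \<in> cycle_ball2 k b" "i \<notin> {a, j, b}"
      using edge less by auto
    with cycle_ball2_inter[OF k j i(1)] show False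
      unfolding a_def b_def cycle_star_def by auto
  qed
  have "c \<in> cycle_ball2 k a" "d \<in> cycle_ball2 k b"
    unfolding c_def d_def cycle_ball2_def by simp_all
  then have "cycle_star k c \<in> {w \<in> V. (u, w) \<in> E} - {v}"
    and "cycle_star k d \<in> {w \<in> V. (v, w) \<in> E} - {u}"
    unfolding uv using vertex edge less distinct cycle_star_inj[OF k5] by auto
  then show "\<not> {w \<in> V. (u, w) \<in> E} \<subseteq> {v}" "\<not> {w \<in> V. (v, w) \<in> E} \<subseteq> {u}"
    by blast+
qed

theorem mainTheorem2:
  fixes k :: nat and q :: "nat set"
  assumes "k \<ge> 7"
    and "q \<in> bicliques (cycle_verts k) (cycle_edges k)"
  shows "\<not> is_biclique_graph (bicliques (cycle_verts k) (cycle_edges k) - {q})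
                              (del_edges (KB_edges (cycle_verts k) (cycle_edges k)) q)"
proof
  assume G: "is_biclique_graph (bicliques (cycle_verts k) (cycle_edges k) - {q})
                              (del_edges (KB_edges (cycle_verts k) (cycle_edges k)) q)"
  obtain j where j: "j < k" "q = cycle_star k j"
    using assms bicliques_cycle[of k] by auto
  note local = KB_cycle_minus_star_local_structure[OF assms(1) j(1), folded j(2)]
  show False
    using biclique_graph_pendant_edge[OF G local(1-4)] local(5,6) by blast
qed

end
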